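(* Assume that for some $\gamma>0$ the sequence $\left(j\lambda_j\log^{1+\gamma}(j\vee2)\right)_{j\ge1}$ is decreasing. Then there exists a constant $C(\gamma)$ depending only on $\gamma$ such that for every integer $k\ge1$, $$\sum_{j\ge1,\,j\ne k}\frac{\lambda_j}{|\lambda_k-\lambda_j|}\le C(\gamma)\,k\left[\log k\vee1\right].$$
   Context: $(\lambda_j)_{j\ge1}$ is the non-increasing sequence of (nonnegative) eigenvalues of the covariance operator $\Gamma h=\mathbb E[\langle h,X\rangle X]$ of a centered square-integrable random element $X$ of a separable Hilbert space. *)

theory Defs
  imports Complex_Main
begin

end

theory Submission
  imports Defs "HOL-Analysis.Harmonic_Numbers"
begin

text \<open>
  Write w(j) = j lam(j) L(j) with L(j) = ln(max j 2) powr (1 + gamma). As w is nonincreasing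
  and L nondecreasing, j lam(j) is nonincreasing too; this alone gives
  lam(j) / |lam(k) - lam(j)| <= k / |j - k|, and the terms with j <= 2k sum to at most
  2 k H(k) = O(k log k). For j > 2k it also gives lam(j) <= lam(k) / 2, so the term is at most
  2 lam(j) / lam(k) <= 2 k L(k) / (j L(j)). By the mean value theorem gamma / (j L(j)) is at most
  the decrement of ln powr (-gamma) on [j - 1, j], so the tail telescopes to
  2 k L(k) ln(2k) powr (-gamma) / gamma <= 2 k ln(max k 2) / gamma.
\<close>

lemma gap_ratio_le_of_scaled_le:
  fixes a b x y :: real
  assumes "0 < x" "x < y" "0 \<le> b" "y * b \<le> x * a"
  shows "b / \<bar>a - b\<bar> \<le> x / (y - x)" and "a / \<bar>a - b\<bar> \<le> y / (y - x)"
proof -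
  have "x * b \<le> y * b" using assms by (intro mult_right_mono) auto
  then have "b \<le> a" using assms by (smt (verit) mult_le_cancel_left_pos)
  consider "a = b" | "b < a" using \<open>b \<le> a\<close> by linarith
  then have "b / \<bar>a - b\<bar> \<le> x / (y - x) \<and> a / \<bar>a - b\<bar> \<le> y / (y - x)"
  proof cases
    case 1
    then show ?thesis using assms by simp
  next
    case 2
    then show ?thesis using assms by (simp add: field_simps)
  qed
  then show "b / \<bar>a - b\<bar> \<le> x / (y - x)" and "a / \<bar>a - b\<bar> \<le> y / (y - x)" by auto
qed

lemma ln_powr_neg_diff_ge:
  fixes \<gamma> x :: real
  assumes "\<gamma> > 0" and "x > 2"
  shows "\<gamma> / (x * ln x powr (1 + \<gamma>)) \<le> ln (x - 1) powr - \<gamma> - ln x powr - \<gamma>"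
proof -
  obtain z where z: "x - 1 < z" "z < x"
    and mvt: "ln x powr - \<gamma> - ln (x - 1) powr - \<gamma> = (x - (x - 1)) * (- \<gamma> * ln z powr (- \<gamma> - 1) / z)"
  proof (rule exE[OF MVT2[where f = "\<lambda>y. ln y powr - \<gamma>" and f' = "\<lambda>y. - \<gamma> * ln y powr (- \<gamma> - 1) / y"]])
    fix y assume "x - 1 \<le> y" "y \<le> x"
    then have "ln y > 0" using assms by simp
    then show "((\<lambda>y. ln y powr - \<gamma>) has_real_derivative - \<gamma> * ln y powr (- \<gamma> - 1) / y) (at y)"
      using \<open>x - 1 \<le> y\<close> assms by (auto intro!: derivative_eq_intros simp: field_simps)
  qed (use that in auto)
  have "ln z > 0" using z assms by simp
  then have "z * ln z powr (1 + \<gamma>) \<le> x * ln x powr (1 + \<gamma>)"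
    using z assms by (intro mult_mono powr_mono2 ln_mono) auto
  then have "\<gamma> / (x * ln x powr (1 + \<gamma>)) \<le> \<gamma> / (z * ln z powr (1 + \<gamma>))"
    using assms z \<open>ln z > 0\<close> by (intro divide_left_mono mult_pos_pos) auto
  also have "\<dots> = \<gamma> * ln z powr (- \<gamma> - 1) / z"
  proof -
    have "- \<gamma> - 1 = - (1 + \<gamma>)" by simp
    then have "ln z powr (- \<gamma> - 1) = inverse (ln z powr (1 + \<gamma>))"
      by (simp only: powr_minus)
    then show ?thesis by (simp add: field_simps)
  qed
  finally show ?thesis using mvt by simp
qed

lemma sums_telescope_from:
  fixes f :: "nat \<Rightarrow> 'a::real_normed_vector"
  assumes "f \<longlonglongrightarrow> 0"
  shows "(\<lambda>j. if m < j then f (j - 1) - f j else 0) sums f m"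
proof -
  have "(\<lambda>i. f (i + m) - f (Suc i + m)) sums (f (0 + m) - 0)"
    using telescope_sums'[OF LIMSEQ_ignore_initial_segment[OF assms, of m]] by simp
  then have "(\<lambda>i. (\<lambda>j. if m < j then f (j - 1) - f j else 0) (i + Suc m)) sums f m"
    by simp
  then show ?thesis by (subst (asm) sums_zero_iff_shift) auto
qed

lemma sum_inverse_dist_le_two_harm:
  "(\<Sum>j\<in>{1..2*k} - {k}. 1 / \<bar>real j - real k\<bar>) \<le> 2 * harm k"
proof -
  have split: "{1..2*k} - {k} = {1..<k} \<union> {k<..2*k}" by auto
  have "(\<Sum>j\<in>{1..2*k} - {k}. 1 / \<bar>real j - real k\<bar>)
      = (\<Sum>j\<in>{1..<k}. 1 / \<bar>real j - real k\<bar>) + (\<Sum>j\<in>{k<..2*k}. 1 / \<bar>real j - real k\<bar>)"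
    unfolding split by (rule sum.union_disjoint) auto
  also have "(\<Sum>j\<in>{1..<k}. 1 / \<bar>real j - real k\<bar>) = (\<Sum>i\<in>{1..<k}. inverse (real i))"
    by (rule sum.reindex_bij_witness[of _ "\<lambda>i. k - i" "\<lambda>i. k - i"]) (auto simp: of_nat_diff divide_inverse)
  also have "\<dots> \<le> harm k"
    unfolding harm_def by (rule sum_mono2) auto
  also have "(\<Sum>j\<in>{k<..2*k}. 1 / \<bar>real j - real k\<bar>) = harm k"
    unfolding harm_def
    by (rule sum.reindex_bij_witness[of _ "\<lambda>i. i + k" "\<lambda>j. j - k"]) (auto simp: of_nat_diff divide_inverse)
  finally show ?thesis by simp
qed

lemma harm_le_one_plus_ln: "k \<ge> 1 \<Longrightarrow> harm k \<le> 1 + ln (real k)"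
  using euler_mascheroni_sequence_decreasing[of 1 k] by (simp add: harm_def)

definition log_weight :: "real \<Rightarrow> nat \<Rightarrow> real" where
  "log_weight \<gamma> n = ln (real (max n 2)) powr (1 + \<gamma>)"

lemma log_weight_pos: "log_weight \<gamma> n > 0"
  unfolding log_weight_def by simp

lemma log_weight_mono: "\<gamma> > 0 \<Longrightarrow> m \<le> n \<Longrightarrow> log_weight \<gamma> m \<le> log_weight \<gamma> n"
  unfolding log_weight_def by (intro powr_mono2 ln_mono) auto

lemma log_weight_mult_ln_powr_le:
  assumes "\<gamma> > 0" and "k \<ge> 1"
  shows "log_weight \<gamma> k * ln (real (2 * k)) powr - \<gamma> \<le> max (ln (real k)) 1"
proof -
  define m where "m = ln (real (max k 2))"
  have "m > 0" unfolding m_def by simp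
  have "m \<le> ln (real (2 * k))"
    unfolding m_def using assms by (intro ln_mono) auto
  then have "m powr \<gamma> * ln (real (2 * k)) powr - \<gamma> \<le> 1"
    using \<open>m > 0\<close> assms by (simp add: powr_minus_divide powr_mono2)
  then have "log_weight \<gamma> k * ln (real (2 * k)) powr - \<gamma> \<le> m"
    using \<open>m > 0\<close> unfolding log_weight_def m_def[symmetric]
    by (simp add: powr_add mult.assoc mult_left_le)
  also have "m \<le> max (ln (real k)) 1"
    unfolding m_def using ln_2_less_1 by (auto simp: max_def)
  finally show ?thesis .
qed

lemma scaled_le_of_weighted_le:
  assumes "\<gamma> > 0" "0 \<le> lam j" "i \<le> j"
    and "real j * lam j * log_weight \<gamma> j \<le> real i * lam i * log_weight \<gamma> i"
  shows "real j * lam j \<le> real i * lam i"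
proof -
  have "real j * lam j * log_weight \<gamma> i \<le> real j * lam j * log_weight \<gamma> j"
    using assms log_weight_mono by (intro mult_left_mono) auto
  then show ?thesis
    using assms(4) log_weight_pos[of \<gamma> i] by (smt (verit) mult_le_cancel_right_pos)
qed

lemma gap_ratio_le_near:
  fixes lam :: "nat \<Rightarrow> real"
  assumes scaled: "\<And>i j. 1 \<le> i \<Longrightarrow> i \<le> j \<Longrightarrow> real j * lam j \<le> real i * lam i"
    and nonneg: "\<And>j. 1 \<le> j \<Longrightarrow> 0 \<le> lam j"
    and "1 \<le> j" "1 \<le> k" "j \<noteq> k"
  shows "lam j / \<bar>lam k - lam j\<bar> \<le> real k / \<bar>real j - real k\<bar>"
proof (cases "j < k")
  case True
  have "lam j / \<bar>lam j - lam k\<bar> \<le> real k / (real k - real j)"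
    using True assms by (intro gap_ratio_le_of_scaled_le(2)) auto
  then show ?thesis using True by (simp add: abs_minus_commute)
next
  case False
  then have "k < j" using assms by simp
  then have "lam j / \<bar>lam k - lam j\<bar> \<le> real k / (real j - real k)"
    using assms by (intro gap_ratio_le_of_scaled_le(1)) auto
  then show ?thesis using \<open>k < j\<close> by simp
qed

lemma gap_ratio_le_far:
  fixes lam :: "nat \<Rightarrow> real"
  assumes "\<gamma> > 0" "1 \<le> k" "2 * k < j" "0 \<le> lam j"
    and weighted: "real j * lam j * log_weight \<gamma> j \<le> real k * lam k * log_weight \<gamma> k"
  shows "lam j / \<bar>lam k - lam j\<bar>
    \<le> 2 * real k * log_weight \<gamma> k / \<gamma> * (ln (real j - 1) powr - \<gamma> - ln (real j) powr - \<gamma>)"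
proof -
  define r where "r = real k * log_weight \<gamma> k / (real j * log_weight \<gamma> j)"
  have "r \<ge> 0" unfolding r_def using log_weight_pos[of \<gamma>] by (simp add: less_imp_le)
  have "lam j \<le> r * lam k"
    using weighted log_weight_pos[of \<gamma> j] assms unfolding r_def by (simp add: field_simps)
  have "2 * real k * lam j \<le> real k * lam k"
  proof -
    have "real (2 * k) * lam j \<le> real j * lam j" using assms by (intro mult_right_mono) auto
    also have "\<dots> \<le> real k * lam k" using assms by (intro scaled_le_of_weighted_le) auto
    finally show ?thesis by simp
  qed
  then have "2 * lam j \<le> lam k" using assms by simp
  have "lam j / \<bar>lam k - lam j\<bar> \<le> 2 * r"
  proof (cases "lam k = 0")
    case True
    then show ?thesis using \<open>2 * lam j \<le> lam k\<close> \<open>r \<ge> 0\<close> assms by simp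
  next
    case False
    then have "lam k > 0" using \<open>2 * lam j \<le> lam k\<close> assms by simp
    moreover have "lam j * (2 * lam j) \<le> lam j * lam k"
      using \<open>2 * lam j \<le> lam k\<close> assms by (intro mult_left_mono) auto
    ultimately have "lam j / \<bar>lam k - lam j\<bar> \<le> 2 * lam j / lam k"
      using \<open>2 * lam j \<le> lam k\<close> assms by (simp add: field_simps)
    also have "\<dots> \<le> 2 * r" using \<open>lam j \<le> r * lam k\<close> \<open>lam k > 0\<close> by (simp add: field_simps)
    finally show ?thesis .
  qed
  also have "2 * r = 2 * real k * log_weight \<gamma> k / \<gamma> * (\<gamma> / (real j * ln (real j) powr (1 + \<gamma>)))"
    using assms unfolding r_def log_weight_def by (simp add: max_def)
  also have "\<dots> \<le> 2 * real k * log_weight \<gamma> k / \<gamma> * (ln (real j - 1) powr - \<gamma> - ln (real j) powr - \<gamma>)"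
    using assms log_weight_pos[of \<gamma> k] by (intro mult_left_mono ln_powr_neg_diff_ge) auto
  finally show ?thesis .
qed

lemma near_plus_tail_bound:
  assumes "\<gamma> > 0" and "k \<ge> 1"
  shows "real k * (\<Sum>j\<in>{1..2*k} - {k}. 1 / \<bar>real j - real k\<bar>)
      + 2 * real k * log_weight \<gamma> k / \<gamma> * ln (real (2 * k)) powr - \<gamma>
    \<le> (4 + 2 / \<gamma>) * real k * max (ln (real k)) 1"
proof -
  define M where "M = max (ln (real k)) 1"
  have "real k * (\<Sum>j\<in>{1..2*k} - {k}. 1 / \<bar>real j - real k\<bar>) \<le> real k * (2 * (1 + ln (real k)))"
    using sum_inverse_dist_le_two_harm[of k] harm_le_one_plus_ln[OF \<open>k \<ge> 1\<close>]
    by (intro mult_left_mono) auto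
  also have "\<dots> \<le> real k * (4 * M)" unfolding M_def by (intro mult_left_mono) auto
  finally have near: "real k * (\<Sum>j\<in>{1..2*k} - {k}. 1 / \<bar>real j - real k\<bar>) \<le> 4 * real k * M"
    by (simp add: mult_ac)
  have "2 * real k * log_weight \<gamma> k / \<gamma> * ln (real (2 * k)) powr - \<gamma>
      = 2 / \<gamma> * real k * (log_weight \<gamma> k * ln (real (2 * k)) powr - \<gamma>)"
    by simp
  also have "\<dots> \<le> 2 / \<gamma> * real k * M"
    unfolding M_def using assms by (intro mult_left_mono log_weight_mult_ln_powr_le) auto
  finally show ?thesis
    using near unfolding M_def by (simp add: algebra_simps)
qed

lemma gap_ratio_sum_bound:
  fixes lam :: "nat \<Rightarrow> real"
  assumes "\<gamma> > 0" and nonneg: "\<forall>j\<ge>1. 0 \<le> lam j"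
    and weighted: "\<forall>i j. 1 \<le> i \<longrightarrow> i \<le> j \<longrightarrow>
      real j * lam j * log_weight \<gamma> j \<le> real i * lam i * log_weight \<gamma> i"
    and "k \<ge> 1"
  shows "summable (\<lambda>j. if j \<ge> 1 \<and> j \<noteq> k then lam j / \<bar>lam k - lam j\<bar> else 0)
    \<and> (\<Sum>j. if j \<ge> 1 \<and> j \<noteq> k then lam j / \<bar>lam k - lam j\<bar> else 0)
      \<le> (4 + 2 / \<gamma>) * real k * max (ln (real k)) 1"
proof -
  define F where "F = (\<lambda>j. if j \<ge> 1 \<and> j \<noteq> k then lam j / \<bar>lam k - lam j\<bar> else 0)"
  define near where "near j = (if j \<in> {1..2*k} - {k} then real k * (1 / \<bar>real j - real k\<bar>) else 0)" for j
  define f where "f n = ln (real n) powr - \<gamma>" for n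
  define tail where "tail j = (if 2 * k < j then f (j - 1) - f j else 0)" for j
  define c where "c = 2 * real k * log_weight \<gamma> k / \<gamma>"
  have "c \<ge> 0" unfolding c_def using \<open>\<gamma> > 0\<close> log_weight_pos[of \<gamma> k] by simp
  have "near j \<ge> 0" for j unfolding near_def by simp
  have "tail j \<ge> 0" for j
    unfolding tail_def f_def using \<open>\<gamma> > 0\<close> \<open>k \<ge> 1\<close> by (auto intro!: powr_mono2')
  have F_le: "F j \<le> near j + c * tail j" for j
  proof (cases "1 \<le> j \<and> j \<noteq> k")
    case False
    then show ?thesis
      unfolding F_def using \<open>near j \<ge> 0\<close> \<open>tail j \<ge> 0\<close> \<open>c \<ge> 0\<close> by simp
  next
    case True
    show ?thesis
    proof (cases "j \<le> 2 * k")
      case True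
      have "lam j / \<bar>lam k - lam j\<bar> \<le> real k / \<bar>real j - real k\<bar>"
        using \<open>1 \<le> j \<and> j \<noteq> k\<close> \<open>k \<ge> 1\<close> nonneg
        by (intro gap_ratio_le_near scaled_le_of_weighted_le[OF \<open>\<gamma> > 0\<close>]) (auto simp: weighted)
      then show ?thesis using True \<open>1 \<le> j \<and> j \<noteq> k\<close> unfolding F_def near_def tail_def by simp
    next
      case False
      have "lam j / \<bar>lam k - lam j\<bar> \<le> c * (ln (real j - 1) powr - \<gamma> - ln (real j) powr - \<gamma>)"
        unfolding c_def using False \<open>k \<ge> 1\<close> \<open>\<gamma> > 0\<close> nonneg weighted
        by (intro gap_ratio_le_far) auto
      then show ?thesis
        using False \<open>1 \<le> j \<and> j \<noteq> k\<close> unfolding F_def near_def tail_def f_def by (simp add: of_nat_diff)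
    qed
  qed
  have near_sums: "near sums (real k * (\<Sum>j\<in>{1..2*k} - {k}. 1 / \<bar>real j - real k\<bar>))"
    unfolding near_def sum_distrib_left by (rule sums_If_finite_set) simp
  have "f \<longlonglongrightarrow> 0"
    unfolding f_def using \<open>\<gamma> > 0\<close>
    by (intro tendsto_neg_powr filterlim_compose[OF ln_at_top filterlim_real_sequentially]) simp
  then have "tail sums f (2 * k)"
    unfolding tail_def by (rule sums_telescope_from)
  with near_sums have bound_sums: "(\<lambda>j. near j + c * tail j)
      sums (real k * (\<Sum>j\<in>{1..2*k} - {k}. 1 / \<bar>real j - real k\<bar>) + c * f (2 * k))"
    by (intro sums_add sums_mult)
  have F_nonneg: "F j \<ge> 0" for j unfolding F_def using nonneg by simp
  have "summable F"
    using F_le F_nonneg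
    by (intro summable_comparison_test'[OF sums_summable[OF bound_sums], where N = 0]) simp
  have "suminf F \<le> real k * (\<Sum>j\<in>{1..2*k} - {k}. 1 / \<bar>real j - real k\<bar>) + c * f (2 * k)"
    by (rule sums_le[OF F_le summable_sums[OF \<open>summable F\<close>] bound_sums])
  also have "\<dots> \<le> (4 + 2 / \<gamma>) * real k * max (ln (real k)) 1"
    unfolding c_def f_def using assms by (intro near_plus_tail_bound) auto
  finally show ?thesis
    using \<open>summable F\<close> unfolding F_def by simp
qed

theorem lemma10p1:
  fixes \<gamma> :: real
  assumes "\<gamma> > 0"
  shows "\<exists>C::real. \<forall>lam::nat \<Rightarrow> real.
     ((\<forall>j\<ge>1. 0 \<le> lam j) \<and> (\<forall>j\<ge>1. lam (Suc j) \<le> lam j)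
      \<and> summable (\<lambda>j. if j \<ge> 1 then lam j else 0)
      \<and> (\<forall>i j. 1 \<le> i \<longrightarrow> i \<le> j \<longrightarrow>
             real j * lam j * ln (real (max j 2)) powr (1 + \<gamma>)
               \<le> real i * lam i * ln (real (max i 2)) powr (1 + \<gamma>)))
     \<longrightarrow> (\<forall>k\<ge>1.
           summable (\<lambda>j. if j \<ge> 1 \<and> j \<noteq> k then lam j / \<bar>lam k - lam j\<bar> else 0)
           \<and> (\<Sum>j. if j \<ge> 1 \<and> j \<noteq> k then lam j / \<bar>lam k - lam j\<bar> else 0)
               \<le> C * real k * max (ln (real k)) 1)"
  by (intro exI[of _ "4 + 2 / \<gamma>"] allI impI, elim conjE)
    (rule gap_ratio_sum_bound[OF assms, unfolded log_weight_def])

end
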